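(* In the situation below, the image $\bar\chi\in B$ of $\chi$ under $A\to B$ equals $(\mathbf a_{B^*})^{-1}$, the inverse of the distinguished group-like element of $B^*$.
   Context: $\Bbbk$ a field of characteristic $\ne 2$, $\mathbb G$ an algebraic supergroup, $\mathbb N$ a finite normal super-subgroup, $A=\mathcal O(\mathbb G)$, $B=\mathcal O(\mathbb N)$ with quotient map $a\mapsto\bar a$. Normality gives a left $A$-coaction on $B$, $\bar a\mapsto\sum(-1)^{|a_{(2)}||a_{(3)}|}a_{(1)}S_A(a_{(3)})\otimes\bar a_{(2)}$, hence a dual right $A$-supercomodule structure on $B^*$. Fix a nonzero homogeneous left integral $\phi$ in $B^*$ ($h\phi=\varepsilon(h)\phi$ for all $h\in B^*$; unique up to scalar). There is a unique group-like $\chi\in A$ with $\phi\mapsto\phi\otimes\chi$ under the coaction. The distinguished group-like element $\mathbf a_{B^*}\in B\cong B^{**}$ is the unique group-like element with $\phi*f=\langle f,\mathbf a_{B^*}\rangle\phi$ for all $f\in B^*$. *)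

theory Defs
  imports Complex_Main
begin

text \<open>The underlying k-vector space structure is given by the scalar multiplication sm,
  the Z/2-grading by the even and odd subspaces ev, od.
  The coproduct of x is given (Sweedler-style) by a finite list of pairs of
  homogeneous elements representing an element of A tensor A; elements of tensor
  products are compared via all k-multilinear forms (which separate points of
  a tensor product of vector spaces over a field).\<close>

record ('k, 'a) hsalg =
  sm  :: "'k \<Rightarrow> 'a \<Rightarrow> 'a"
  ev  :: "'a set"
  od  :: "'a set"
  mul :: "'a \<Rightarrow> 'a \<Rightarrow> 'a"
  one :: 'a
  cop :: "'a \<Rightarrow> ('a \<times> 'a) list"
  cou :: "'a \<Rightarrow> 'k"
  ant :: "'a \<Rightarrow> 'a"

definition homp :: "('k, 'a) hsalg \<Rightarrow> bool \<Rightarrow> 'a \<Rightarrow> bool" where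
  "homp H p x \<longleftrightarrow> x \<in> (if p then od H else ev H)"

definition homog :: "('k, 'a) hsalg \<Rightarrow> 'a \<Rightarrow> bool" where
  "homog H x \<longleftrightarrow> x \<in> ev H \<or> x \<in> od H"

text \<open>parity of a homogeneous element (True = odd); the value on 0 is irrelevant\<close>
definition par :: "('k, 'a) hsalg \<Rightarrow> 'a \<Rightarrow> bool" where
  "par H x \<longleftrightarrow> x \<in> od H"

definition ksgn :: "bool \<Rightarrow> bool \<Rightarrow> 'k::field" where
  "ksgn p q = (if p \<and> q then -1 else 1)"

definition bilin :: "('k::field \<Rightarrow> 'a::ab_group_add \<Rightarrow> 'a) \<Rightarrow> ('k \<Rightarrow> 'b::ab_group_add \<Rightarrow> 'b) \<Rightarrow> ('a \<Rightarrow> 'b \<Rightarrow> 'k) \<Rightarrow> bool" where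
  "bilin s1 s2 \<phi> \<longleftrightarrow> (\<forall>y. Vector_Spaces.linear s1 (*) (\<lambda>x. \<phi> x y)) \<and> (\<forall>x. Vector_Spaces.linear s2 (*) (\<phi> x))"

definition trilin :: "('k::field \<Rightarrow> 'a::ab_group_add \<Rightarrow> 'a) \<Rightarrow> ('a \<Rightarrow> 'a \<Rightarrow> 'a \<Rightarrow> 'k) \<Rightarrow> bool" where
  "trilin s \<phi> \<longleftrightarrow> (\<forall>y z. Vector_Spaces.linear s (*) (\<lambda>x. \<phi> x y z)) \<and>
     (\<forall>x z. Vector_Spaces.linear s (*) (\<lambda>y. \<phi> x y z)) \<and> (\<forall>x y. Vector_Spaces.linear s (*) (\<phi> x y))"

text \<open>equality of two elements of V tensor W given as lists of pairs\<close>
definition teq2 :: "('k::field \<Rightarrow> 'a::ab_group_add \<Rightarrow> 'a) \<Rightarrow> ('k \<Rightarrow> 'b::ab_group_add \<Rightarrow> 'b) \<Rightarrow> ('a \<times> 'b) list \<Rightarrow> ('a \<times> 'b) list \<Rightarrow> bool" where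
  "teq2 s1 s2 xs ys \<longleftrightarrow> (\<forall>\<phi>. bilin s1 s2 \<phi> \<longrightarrow>
     (\<Sum>(x, y)\<leftarrow>xs. \<phi> x y) = (\<Sum>(x, y)\<leftarrow>ys. \<phi> x y))"

definition teq3 :: "('k::field \<Rightarrow> 'a::ab_group_add \<Rightarrow> 'a) \<Rightarrow> ('a \<times> 'a \<times> 'a) list \<Rightarrow> ('a \<times> 'a \<times> 'a) list \<Rightarrow> bool" where
  "teq3 s xs ys \<longleftrightarrow> (\<forall>\<phi>. trilin s \<phi> \<longrightarrow>
     (\<Sum>(x, y, z)\<leftarrow>xs. \<phi> x y z) = (\<Sum>(x, y, z)\<leftarrow>ys. \<phi> x y z))"

definition cop2l :: "('k, 'a) hsalg \<Rightarrow> 'a \<Rightarrow> ('a \<times> 'a \<times> 'a) list" where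
  "cop2l H x = concat (map (\<lambda>(y, z). map (\<lambda>(y1, y2). (y1, y2, z)) (cop H y)) (cop H x))"

definition cop2r :: "('k, 'a) hsalg \<Rightarrow> 'a \<Rightarrow> ('a \<times> 'a \<times> 'a) list" where
  "cop2r H x = concat (map (\<lambda>(y, z). map (\<lambda>(z1, z2). (y, z1, z2)) (cop H z)) (cop H x))"

definition super_vs :: "('k::field, 'a::ab_group_add) hsalg \<Rightarrow> bool" where
  "super_vs H \<longleftrightarrow> vector_space (sm H) \<and> module.subspace (sm H) (ev H) \<and> module.subspace (sm H) (od H)
     \<and> ev H \<inter> od H = {0} \<and> (\<forall>x. \<exists>u\<in>ev H. \<exists>v\<in>od H. x = u + v)"

definition comm_hopf_superalg :: "('k::field, 'a::ab_group_add) hsalg \<Rightarrow> bool" where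
  "comm_hopf_superalg H \<longleftrightarrow>
    super_vs H \<and>
    \<comment> \<open>associative unital superalgebra\<close>
    (\<forall>y. Vector_Spaces.linear (sm H) (sm H) (\<lambda>x. mul H x y)) \<and>
    (\<forall>x. Vector_Spaces.linear (sm H) (sm H) (mul H x)) \<and>
    (\<forall>x y z. mul H (mul H x y) z = mul H x (mul H y z)) \<and>
    (\<forall>x. mul H (one H) x = x \<and> mul H x (one H) = x) \<and>
    one H \<in> ev H \<and>
    (\<forall>p q x y. homp H p x \<longrightarrow> homp H q y \<longrightarrow> homp H (p \<noteq> q) (mul H x y)) \<and>
    \<comment> \<open>supercommutativity\<close>
    (\<forall>x y. homog H x \<longrightarrow> homog H y \<longrightarrow>
        mul H x y = sm H (ksgn (par H x) (par H y)) (mul H y x)) \<and>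
    \<comment> \<open>coproduct: even linear map given by homogeneous Sweedler lists\<close>
    (\<forall>x. \<forall>(y, z)\<in>set (cop H x). homog H y \<and> homog H z) \<and>
    (\<forall>p x. homp H p x \<longrightarrow> (\<forall>(y, z)\<in>set (cop H x). \<exists>q r. homp H q y \<and> homp H r z \<and> (q \<noteq> r) = p)) \<and>
    (\<forall>x y. teq2 (sm H) (sm H) (cop H (x + y)) (cop H x @ cop H y)) \<and>
    (\<forall>c x. teq2 (sm H) (sm H) (cop H (sm H c x)) (map (\<lambda>(y, z). (sm H c y, z)) (cop H x))) \<and>
    \<comment> \<open>coassociativity\<close>
    (\<forall>x. teq3 (sm H) (cop2l H x) (cop2r H x)) \<and>
    \<comment> \<open>counit: even linear map\<close>
    Vector_Spaces.linear (sm H) (*) (cou H) \<and>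
    (\<forall>x\<in>od H. cou H x = 0) \<and>
    (\<forall>x. (\<Sum>(y, z)\<leftarrow>cop H x. sm H (cou H y) z) = x) \<and>
    (\<forall>x. (\<Sum>(y, z)\<leftarrow>cop H x. sm H (cou H z) y) = x) \<and>
    \<comment> \<open>coproduct and counit are superalgebra maps\<close>
    (\<forall>x y. teq2 (sm H) (sm H) (cop H (mul H x y))
       (concat (map (\<lambda>(x1, x2). map (\<lambda>(y1, y2).
           (sm H (ksgn (par H x2) (par H y1)) (mul H x1 y1), mul H x2 y2)) (cop H y)) (cop H x)))) \<and>
    teq2 (sm H) (sm H) (cop H (one H)) [(one H, one H)] \<and>
    (\<forall>x y. cou H (mul H x y) = cou H x * cou H y) \<and> cou H (one H) = 1 \<and>
    \<comment> \<open>antipode\<close>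
    Vector_Spaces.linear (sm H) (sm H) (ant H) \<and>
    (\<forall>x. (\<Sum>(y, z)\<leftarrow>cop H x. mul H (ant H y) z) = sm H (cou H x) (one H)) \<and>
    (\<forall>x. (\<Sum>(y, z)\<leftarrow>cop H x. mul H y (ant H z)) = sm H (cou H x) (one H))"

inductive_set gen_alg :: "('k, 'a::ab_group_add) hsalg \<Rightarrow> 'a set \<Rightarrow> 'a set" for H G where
  gen: "x \<in> G \<Longrightarrow> x \<in> gen_alg H G"
| one: "one H \<in> gen_alg H G"
| add: "x \<in> gen_alg H G \<Longrightarrow> y \<in> gen_alg H G \<Longrightarrow> x + y \<in> gen_alg H G"
| smul: "x \<in> gen_alg H G \<Longrightarrow> sm H c x \<in> gen_alg H G"
| mul: "x \<in> gen_alg H G \<Longrightarrow> y \<in> gen_alg H G \<Longrightarrow> mul H x y \<in> gen_alg H G"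

text \<open>O(G) of an algebraic supergroup: finitely generated supercommutative Hopf superalgebra\<close>
definition algebraic_supergroup_alg :: "('k::field, 'a::ab_group_add) hsalg \<Rightarrow> bool" where
  "algebraic_supergroup_alg H \<longleftrightarrow> comm_hopf_superalg H \<and> (\<exists>G. finite G \<and> gen_alg H G = UNIV)"

definition fin_dim :: "('k::field, 'a::ab_group_add) hsalg \<Rightarrow> bool" where
  "fin_dim H \<longleftrightarrow> (\<exists>S. finite S \<and> module.span (sm H) S = UNIV)"

definition hopf_superalg_hom :: "('k::field, 'a::ab_group_add) hsalg \<Rightarrow> ('k, 'b::ab_group_add) hsalg \<Rightarrow> ('a \<Rightarrow> 'b) \<Rightarrow> bool" where
  "hopf_superalg_hom A B \<pi> \<longleftrightarrow>
    Vector_Spaces.linear (sm A) (sm B) \<pi> \<and>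
    (\<forall>p x. homp A p x \<longrightarrow> homp B p (\<pi> x)) \<and>
    (\<forall>x y. \<pi> (mul A x y) = mul B (\<pi> x) (\<pi> y)) \<and> \<pi> (one A) = one B \<and>
    (\<forall>x. teq2 (sm B) (sm B) (cop B (\<pi> x)) (map (\<lambda>(y, z). (\<pi> y, \<pi> z)) (cop A x))) \<and>
    (\<forall>x. cou B (\<pi> x) = cou A x) \<and>
    (\<forall>x. ant B (\<pi> x) = \<pi> (ant A x))"

definition adj_expr :: "('k::field, 'a::ab_group_add) hsalg \<Rightarrow> ('a \<Rightarrow> 'b) \<Rightarrow> 'a \<Rightarrow> ('a \<times> 'b) list" where
  "adj_expr A \<pi> x = map (\<lambda>(x1, x2, x3). (sm A (ksgn (par A x2) (par A x3)) (mul A x1 (ant A x3)), \<pi> x2))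
      (cop2r A x)"

text \<open>normality of the Hopf superideal ker pi (i.e. of the super-subgroup N):
  the adjoint coaction descends to B = A / ker pi\<close>
definition normal_quotient :: "('k::field, 'a::ab_group_add) hsalg \<Rightarrow> ('k, 'b::ab_group_add) hsalg \<Rightarrow> ('a \<Rightarrow> 'b) \<Rightarrow> bool" where
  "normal_quotient A B \<pi> \<longleftrightarrow> (\<forall>x. \<pi> x = 0 \<longrightarrow> teq2 (sm A) (sm B) (adj_expr A \<pi> x) [])"

definition coactB :: "('k::field, 'a::ab_group_add) hsalg \<Rightarrow> ('a \<Rightarrow> 'b) \<Rightarrow> 'b \<Rightarrow> ('a \<times> 'b) list" where
  "coactB A \<pi> b = adj_expr A \<pi> (SOME x. \<pi> x = b)"

text \<open>multiplication of B* (dual of the coproduct of B, with Koszul sign)\<close>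
definition conv :: "('k::field, 'b::ab_group_add) hsalg \<Rightarrow> ('b \<Rightarrow> 'k) \<Rightarrow> ('b \<Rightarrow> 'k) \<Rightarrow> 'b \<Rightarrow> 'k" where
  "conv B f g b = (\<Sum>(x, y)\<leftarrow>cop B b. ksgn (par B x) (par B y) * f x * g y)"

definition dual_space :: "('k::field, 'b::ab_group_add) hsalg \<Rightarrow> ('b \<Rightarrow> 'k) set" where
  "dual_space B = {f. Vector_Spaces.linear (sm B) (*) f}"

definition homog_functional :: "('k::field, 'b::ab_group_add) hsalg \<Rightarrow> ('b \<Rightarrow> 'k) \<Rightarrow> bool" where
  "homog_functional B f \<longleftrightarrow> (\<forall>x\<in>od B. f x = 0) \<or> (\<forall>x\<in>ev B. f x = 0)"

text \<open>left integral in B*: h phi = eps_{B*}(h) phi, where eps_{B*}(h) = h(1_B)\<close>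
definition left_integral :: "('k::field, 'b::ab_group_add) hsalg \<Rightarrow> ('b \<Rightarrow> 'k) \<Rightarrow> bool" where
  "left_integral B \<phi> \<longleftrightarrow> \<phi> \<in> dual_space B \<and>
     (\<forall>h\<in>dual_space B. conv B h \<phi> = (\<lambda>b. h (one B) * \<phi> b))"

definition group_like :: "('k::field, 'a::ab_group_add) hsalg \<Rightarrow> 'a \<Rightarrow> bool" where
  "group_like H g \<longleftrightarrow> teq2 (sm H) (sm H) (cop H g) [(g, g)] \<and> cou H g = 1"

text \<open>phi maps to phi (tensor) chi under the right A-coaction on B* dual to coactB:
  the dual coaction rho satisfies  sum <f_0, b> f_1 = sum (-1)^(|b_-1||b_0|) <f, b_0> b_-1\<close>
definition coacts_by :: "('k::field, 'a::ab_group_add) hsalg \<Rightarrow> ('a \<Rightarrow> 'b::ab_group_add) \<Rightarrow> ('k, 'b) hsalg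
     \<Rightarrow> ('b \<Rightarrow> 'k) \<Rightarrow> 'a \<Rightarrow> bool" where
  "coacts_by A \<pi> B \<phi> \<chi> \<longleftrightarrow> (\<forall>b. (\<Sum>(c, b0)\<leftarrow>coactB A \<pi> b.
       sm A (ksgn (par A c) (par B b0) * \<phi> b0) c) = sm A (\<phi> b) \<chi>)"

definition distinguished_gl :: "('k::field, 'b::ab_group_add) hsalg \<Rightarrow> ('b \<Rightarrow> 'k) \<Rightarrow> 'b \<Rightarrow> bool" where
  "distinguished_gl B \<phi> a \<longleftrightarrow> group_like B a \<and>
     (\<forall>f\<in>dual_space B. conv B \<phi> f = (\<lambda>b. f a * \<phi> b))"

end

theory Submission
  imports Defs
begin

text \<open>Let \<open>Q\<close> be the parity involution raised to the parity of the integral \<open>\<phi>\<close>.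
  Unwinding the Koszul signs, the left integral and the distinguished group-like element read
  \<open>\<Sum> \<phi>(b\<^sub>2) Q(b\<^sub>1) = \<phi>(b) 1\<close> and \<open>\<Sum> \<phi>(b\<^sub>1) b\<^sub>2 = \<phi>(b) Q(a)\<close>, and the defining
  property of \<open>\<chi>\<close> reads \<open>\<Sum> \<phi>(\<pi> x\<^sub>2) Q(x\<^sub>1) S(x\<^sub>3) = \<phi>(\<pi> x) \<chi>\<close>.
  Applying \<open>\<pi>\<close> to the latter, moving the iterated coproduct from \<open>A\<close> to \<open>B\<close> and using
  coassociativity together with the two identities in \<open>B\<close> gives \<open>\<phi>(b) \<pi>(\<chi>) = \<phi>(b) S(Q a)\<close>.
  The identity for \<open>a\<close>, evaluated at some \<open>b\<close> of the parity of \<open>\<phi>\<close> with \<open>\<phi>(b) \<noteq> 0\<close>,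
  shows that \<open>a\<close> is even, so \<open>\<pi>(\<chi>) = S(a) = a\<^sup>-\<^sup>1\<close>.
  Beyond sign bookkeeping, the one super-specific input is that the antipode is even: this
  follows from uniqueness of the antipode, as \<open>S\<close> conjugated by the parity involution is again
  a left convolution inverse of the identity.\<close>

section \<open>Linear algebra over a field\<close>

lemma linear_map_add: "Vector_Spaces.linear s1 s2 f \<Longrightarrow> f (x + y) = f x + f y"
  by (simp add: linear_iff_module_hom module_hom.add)

lemma linear_map_scale: "Vector_Spaces.linear s1 s2 f \<Longrightarrow> f (s1 c x) = s2 c (f x)"
  by (simp add: linear_iff_module_hom module_hom.scale)

lemma linear_map_zero: "Vector_Spaces.linear s1 s2 f \<Longrightarrow> f 0 = 0"
  by (simp add: linear_iff_module_hom module_hom.zero)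

lemma linear_map_neg: "Vector_Spaces.linear s1 s2 f \<Longrightarrow> f (- x) = - f x"
  by (simp add: linear_iff_module_hom module_hom.neg)

lemma linear_map_diff: "Vector_Spaces.linear s1 s2 f \<Longrightarrow> f (x - y) = f x - f y"
  by (simp add: linear_iff_module_hom module_hom.diff)

lemma linear_map_sum_list2:
  "Vector_Spaces.linear s1 s2 f \<Longrightarrow> f (\<Sum>(x, y)\<leftarrow>xs. g x y) = (\<Sum>(x, y)\<leftarrow>xs. f (g x y))"
  by (induction xs) (auto simp: linear_map_add linear_map_zero)

lemma linear_map_sum_list3:
  "Vector_Spaces.linear s1 s2 f \<Longrightarrow> f (\<Sum>(x, y, z)\<leftarrow>xs. g x y z) = (\<Sum>(x, y, z)\<leftarrow>xs. f (g x y z))"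
  by (induction xs) (auto simp: linear_map_add linear_map_zero)

lemma linear_map_compose:
  "Vector_Spaces.linear s1 s2 f \<Longrightarrow> Vector_Spaces.linear s2 s3 g \<Longrightarrow> Vector_Spaces.linear s1 s3 (\<lambda>x. g (f x))"
  using Vector_Spaces.linear_compose[of s1 s2 f s3 g] by (simp add: o_def)

lemma linear_mapI:
  assumes "vector_space s1" "vector_space s2"
    and "\<And>x y. f (x + y) = f x + f y" "\<And>c x. f (s1 c x) = s2 c (f x)"
  shows "Vector_Spaces.linear s1 s2 f"
  using assms
  unfolding linear_iff_module_hom module_hom_def module_hom_axioms_def module_iff_vector_space by auto

lemma vector_space_field_mult: "vector_space ((*) :: 'k::field \<Rightarrow> 'k \<Rightarrow> 'k)"
  by unfold_locales (auto simp: algebra_simps)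

lemma linear_functional_exists:
  assumes "vector_space s" and "v \<noteq> 0"
  shows "\<exists>l. Vector_Spaces.linear s ((*) :: 'k::field \<Rightarrow> 'k \<Rightarrow> 'k) l \<and> l v = 1"
proof -
  interpret vector_space_pair s "(*) :: 'k \<Rightarrow> 'k \<Rightarrow> 'k"
    using assms(1) vector_space_field_mult by (simp add: vector_space_pair_def)
  have "vs1.independent {v}" using assms(2) by simp
  from linear_independent_extend[OF this, of "\<lambda>_. 1"] show ?thesis by auto
qed

lemma eq_by_linear_functionals:
  assumes "vector_space s"
    and "\<And>l. Vector_Spaces.linear s ((*) :: 'k::field \<Rightarrow> 'k \<Rightarrow> 'k) l \<Longrightarrow> l v = l w"
  shows "v = w"
proof (rule ccontr)
  assume "v \<noteq> w"
  with linear_functional_exists[OF assms(1)] obtain l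
    where l: "Vector_Spaces.linear s ((*) :: 'k \<Rightarrow> 'k \<Rightarrow> 'k) l" "l (v - w) = 1"
    by (metis right_minus_eq)
  with assms(2)[OF l(1)] show False by (simp add: linear_map_diff)
qed

lemma teq2_sum_list_eq:
  assumes "teq2 s1 s2 xs ys" "vector_space s3"
    and "\<And>y. Vector_Spaces.linear s1 s3 (\<lambda>x. F x y)" "\<And>x. Vector_Spaces.linear s2 s3 (F x)"
  shows "(\<Sum>(x, y)\<leftarrow>xs. F x y) = (\<Sum>(x, y)\<leftarrow>ys. F x y)"
proof (rule eq_by_linear_functionals[OF assms(2)])
  fix l :: "_ \<Rightarrow> 'a" assume l: "Vector_Spaces.linear s3 (*) l"
  have "bilin s1 s2 (\<lambda>x y. l (F x y))"
    unfolding bilin_def using linear_map_compose[OF assms(3) l] linear_map_compose[OF assms(4) l] by blast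
  with assms(1) show "l (\<Sum>(x, y)\<leftarrow>xs. F x y) = l (\<Sum>(x, y)\<leftarrow>ys. F x y)"
    unfolding teq2_def by (simp add: linear_map_sum_list2[OF l])
qed

lemma teq3_sum_list_eq:
  assumes "teq3 s xs ys" "vector_space s3"
    and "\<And>y z. Vector_Spaces.linear s s3 (\<lambda>x. F x y z)" "\<And>x z. Vector_Spaces.linear s s3 (\<lambda>y. F x y z)"
    and "\<And>x y. Vector_Spaces.linear s s3 (F x y)"
  shows "(\<Sum>(x, y, z)\<leftarrow>xs. F x y z) = (\<Sum>(x, y, z)\<leftarrow>ys. F x y z)"
proof (rule eq_by_linear_functionals[OF assms(2)])
  fix l :: "_ \<Rightarrow> 'a" assume l: "Vector_Spaces.linear s3 (*) l"
  have "trilin s (\<lambda>x y z. l (F x y z))"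
    unfolding trilin_def
    using linear_map_compose[OF assms(3) l] linear_map_compose[OF assms(4) l] linear_map_compose[OF assms(5) l]
    by blast
  with assms(1) show "l (\<Sum>(x, y, z)\<leftarrow>xs. F x y z) = l (\<Sum>(x, y, z)\<leftarrow>ys. F x y z)"
    unfolding teq3_def by (simp add: linear_map_sum_list3[OF l])
qed

lemma sum_list_case_prod_cong:
  "(\<And>x y. (x, y) \<in> set xs \<Longrightarrow> f x y = g x y) \<Longrightarrow> (\<Sum>(x, y)\<leftarrow>xs. f x y) = (\<Sum>(x, y)\<leftarrow>xs. g x y)"
  by (induction xs) auto

lemma sum_list_case_prod3_cong:
  "(\<And>x y z. (x, y, z) \<in> set xs \<Longrightarrow> f x y z = g x y z)
    \<Longrightarrow> (\<Sum>(x, y, z)\<leftarrow>xs. f x y z) = (\<Sum>(x, y, z)\<leftarrow>xs. g x y z)"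
  by (induction xs) auto

lemma sum_list_case_prod_neg:
  "(\<Sum>(x, y)\<leftarrow>xs. - (f x y :: 'a::ab_group_add)) = - (\<Sum>(x, y)\<leftarrow>xs. f x y)"
  by (induction xs) auto

lemma sum_list_map_pair:
  "(\<Sum>(a, b)\<leftarrow>map (\<lambda>(y, z). (f y, g z)) xs. F a b) = (\<Sum>(y, z)\<leftarrow>xs. F (f y) (g z))"
  by (induction xs) auto

lemma sum_list_map_triple:
  "(\<Sum>(c, b)\<leftarrow>map (\<lambda>(x1, x2, x3). (f x1 x2 x3, g x1 x2 x3)) xs. F c b)
    = (\<Sum>(x1, x2, x3)\<leftarrow>xs. F (f x1 x2 x3) (g x1 x2 x3))"
  by (induction xs) auto

lemma sum_list_concat_right:
  "(\<Sum>(a, b, c)\<leftarrow>concat (map (\<lambda>(y, z). map (\<lambda>(z1, z2). (y, z1, z2)) (C z)) xs). F a b c)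
    = (\<Sum>(y, z)\<leftarrow>xs. \<Sum>(z1, z2)\<leftarrow>C z. F y z1 z2)"
proof -
  have "(\<Sum>(a, b, c)\<leftarrow>map (\<lambda>(z1, z2). (y, z1, z2)) ys. F a b c) = (\<Sum>(z1, z2)\<leftarrow>ys. F y z1 z2)" for y ys
    by (induction ys) auto
  then show ?thesis by (induction xs) auto
qed

lemma sum_list_concat_left:
  "(\<Sum>(a, b, c)\<leftarrow>concat (map (\<lambda>(y, z). map (\<lambda>(y1, y2). (y1, y2, z)) (C y)) xs). F a b c)
    = (\<Sum>(y, z)\<leftarrow>xs. \<Sum>(y1, y2)\<leftarrow>C y. F y1 y2 z)"
proof -
  have "(\<Sum>(a, b, c)\<leftarrow>map (\<lambda>(y1, y2). (y1, y2, z)) ys. F a b c) = (\<Sum>(y1, y2)\<leftarrow>ys. F y1 y2 z)" for z ys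
    by (induction ys) auto
  then show ?thesis by (induction xs) auto
qed

lemma linear_sum_list_case_prod:
  assumes "vector_space s1" "vector_space s2" "\<And>y z. Vector_Spaces.linear s1 s2 (\<lambda>x. F x y z)"
  shows "Vector_Spaces.linear s1 s2 (\<lambda>x. \<Sum>(y, z)\<leftarrow>xs. F x y z)"
proof (rule linear_mapI[OF assms(1,2)])
  interpret vector_space s2 by (rule assms(2))
  show "(\<Sum>(y, z)\<leftarrow>xs. F (u + v) y z) = (\<Sum>(y, z)\<leftarrow>xs. F u y z) + (\<Sum>(y, z)\<leftarrow>xs. F v y z)" for u v
    by (induction xs) (auto simp: linear_map_add[OF assms(3)])
  show "(\<Sum>(y, z)\<leftarrow>xs. F (s1 c u) y z) = s2 c (\<Sum>(y, z)\<leftarrow>xs. F u y z)" for c u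
    by (induction xs) (auto simp: linear_map_scale[OF assms(3)] scale_right_distrib)
qed

section \<open>Supercommutative Hopf superalgebras\<close>

definition even_part :: "('k, 'a::ab_group_add) hsalg \<Rightarrow> 'a \<Rightarrow> 'a" where
  "even_part H x = (THE u. u \<in> ev H \<and> x - u \<in> od H)"

definition parity_inv :: "('k, 'a::ab_group_add) hsalg \<Rightarrow> 'a \<Rightarrow> 'a" where
  "parity_inv H x = even_part H x - (x - even_part H x)"

definition parity_twist :: "('k, 'a::ab_group_add) hsalg \<Rightarrow> bool \<Rightarrow> 'a \<Rightarrow> 'a" where
  "parity_twist H p x = (if p then parity_inv H x else x)"

locale comm_hopf_superalgebra =
  fixes H :: "('k::field, 'a::ab_group_add) hsalg"
  assumes comm_hopf: "comm_hopf_superalg H"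
begin

lemma vector_space_sm: "vector_space (sm H)"
  using comm_hopf by (simp add: comm_hopf_superalg_def super_vs_def)

sublocale V: vector_space "sm H" by (rule vector_space_sm)

lemma subspace_ev: "V.subspace (ev H)"
  using comm_hopf by (simp add: comm_hopf_superalg_def super_vs_def)

lemma subspace_od: "V.subspace (od H)"
  using comm_hopf by (simp add: comm_hopf_superalg_def super_vs_def)

lemma ev_od_eq_zero: "x \<in> ev H \<Longrightarrow> x \<in> od H \<Longrightarrow> x = 0"
  using comm_hopf by (auto simp: comm_hopf_superalg_def super_vs_def)

lemma ev_od_decomp: "\<exists>u\<in>ev H. \<exists>v\<in>od H. x = u + v"
  using comm_hopf by (simp add: comm_hopf_superalg_def super_vs_def)

lemma mul_linear_left: "Vector_Spaces.linear (sm H) (sm H) (\<lambda>x. mul H x y)"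
  using comm_hopf unfolding comm_hopf_superalg_def by simp

lemma mul_linear_right: "Vector_Spaces.linear (sm H) (sm H) (mul H x)"
  using comm_hopf unfolding comm_hopf_superalg_def by simp

lemma mul_assoc: "mul H (mul H x y) z = mul H x (mul H y z)"
  using comm_hopf unfolding comm_hopf_superalg_def by simp

lemma one_mul [simp]: "mul H (one H) x = x"
  using comm_hopf unfolding comm_hopf_superalg_def by simp

lemma mul_one [simp]: "mul H x (one H) = x"
  using comm_hopf unfolding comm_hopf_superalg_def by simp

lemma one_ev: "one H \<in> ev H"
  using comm_hopf unfolding comm_hopf_superalg_def by simp

lemma mul_homp: "homp H p x \<Longrightarrow> homp H q y \<Longrightarrow> homp H (p \<noteq> q) (mul H x y)"
  using comm_hopf unfolding comm_hopf_superalg_def by simp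

lemma cop_homog: "(y, z) \<in> set (cop H x) \<Longrightarrow> homog H y \<and> homog H z"
  using comm_hopf unfolding comm_hopf_superalg_def by fastforce

lemma cop_homp:
  "homp H p x \<Longrightarrow> (y, z) \<in> set (cop H x) \<Longrightarrow> \<exists>q r. homp H q y \<and> homp H r z \<and> (q \<noteq> r) = p"
  using comm_hopf unfolding comm_hopf_superalg_def by fastforce

lemma cop_add: "teq2 (sm H) (sm H) (cop H (x + y)) (cop H x @ cop H y)"
  using comm_hopf unfolding comm_hopf_superalg_def by simp

lemma cop_scale: "teq2 (sm H) (sm H) (cop H (sm H c x)) (map (\<lambda>(y, z). (sm H c y, z)) (cop H x))"
  using comm_hopf unfolding comm_hopf_superalg_def by simp

lemma coassoc: "teq3 (sm H) (cop2l H x) (cop2r H x)"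
  using comm_hopf unfolding comm_hopf_superalg_def by simp

lemma cou_linear: "Vector_Spaces.linear (sm H) (*) (cou H)"
  using comm_hopf unfolding comm_hopf_superalg_def by simp

lemma cou_od: "x \<in> od H \<Longrightarrow> cou H x = 0"
  using comm_hopf unfolding comm_hopf_superalg_def by simp

lemma counit_left: "(\<Sum>(y, z)\<leftarrow>cop H x. sm H (cou H y) z) = x"
  using comm_hopf unfolding comm_hopf_superalg_def by simp

lemma counit_right: "(\<Sum>(y, z)\<leftarrow>cop H x. sm H (cou H z) y) = x"
  using comm_hopf unfolding comm_hopf_superalg_def by simp

lemma ant_linear: "Vector_Spaces.linear (sm H) (sm H) (ant H)"
  using comm_hopf unfolding comm_hopf_superalg_def by simp

lemma ant_left: "(\<Sum>(y, z)\<leftarrow>cop H x. mul H (ant H y) z) = sm H (cou H x) (one H)"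
  using comm_hopf unfolding comm_hopf_superalg_def by simp

lemma ant_right: "(\<Sum>(y, z)\<leftarrow>cop H x. mul H y (ant H z)) = sm H (cou H x) (one H)"
  using comm_hopf unfolding comm_hopf_superalg_def by simp

lemma zero_ev [simp]: "0 \<in> ev H"
  by (rule V.subspace_0[OF subspace_ev])

lemma zero_od [simp]: "0 \<in> od H"
  by (rule V.subspace_0[OF subspace_od])

lemma ev_add: "x \<in> ev H \<Longrightarrow> y \<in> ev H \<Longrightarrow> x + y \<in> ev H"
  by (rule V.subspace_add[OF subspace_ev])

lemma od_add: "x \<in> od H \<Longrightarrow> y \<in> od H \<Longrightarrow> x + y \<in> od H"
  by (rule V.subspace_add[OF subspace_od])

lemma ev_diff: "x \<in> ev H \<Longrightarrow> y \<in> ev H \<Longrightarrow> x - y \<in> ev H"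
  by (rule V.subspace_diff[OF subspace_ev])

lemma od_diff: "x \<in> od H \<Longrightarrow> y \<in> od H \<Longrightarrow> x - y \<in> od H"
  by (rule V.subspace_diff[OF subspace_od])

lemma ev_scale: "x \<in> ev H \<Longrightarrow> sm H c x \<in> ev H"
  by (rule V.subspace_scale[OF subspace_ev])

lemma od_scale: "x \<in> od H \<Longrightarrow> sm H c x \<in> od H"
  by (rule V.subspace_scale[OF subspace_od])

lemma ev_sum_list2: "(\<And>x y. (x, y) \<in> set xs \<Longrightarrow> f x y \<in> ev H) \<Longrightarrow> (\<Sum>(x, y)\<leftarrow>xs. f x y) \<in> ev H"
  by (induction xs) (auto intro: ev_add)

lemma homp_scale: "homp H p x \<Longrightarrow> homp H p (sm H c x)"
  by (cases p) (simp_all add: homp_def ev_scale od_scale)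

lemma homp_par: "homog H x \<Longrightarrow> homp H (par H x) x"
  by (auto simp: homog_def homp_def par_def)

lemma par_eq_if_homp: "homp H p x \<Longrightarrow> x \<noteq> 0 \<Longrightarrow> par H x = p"
  using ev_od_eq_zero by (cases p) (auto simp: homp_def par_def)

lemma cop2r_homog: "(x1, x2, x3) \<in> set (cop2r H x) \<Longrightarrow> homog H x1 \<and> homog H x2 \<and> homog H x3"
  unfolding cop2r_def by (auto dest: cop_homog)

lemma sum_list_cop2r:
  "(\<Sum>(a, b, c)\<leftarrow>cop2r H x. F a b c) = (\<Sum>(y, z)\<leftarrow>cop H x. \<Sum>(z1, z2)\<leftarrow>cop H z. F y z1 z2)"
  unfolding cop2r_def by (rule sum_list_concat_right)

lemma sum_list_cop2l:
  "(\<Sum>(a, b, c)\<leftarrow>cop2l H x. F a b c) = (\<Sum>(y, z)\<leftarrow>cop H x. \<Sum>(y1, y2)\<leftarrow>cop H y. F y1 y2 z)"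
  unfolding cop2l_def by (rule sum_list_concat_left)

lemma linear_sum_list_cop:
  assumes "vector_space s"
    and "\<And>z. Vector_Spaces.linear (sm H) s (\<lambda>y. F y z)" "\<And>y. Vector_Spaces.linear (sm H) s (F y)"
  shows "Vector_Spaces.linear (sm H) s (\<lambda>x. \<Sum>(y, z)\<leftarrow>cop H x. F y z)"
proof (rule linear_mapI[OF vector_space_sm assms(1)])
  interpret W: vector_space s by (rule assms(1))
  show "(\<Sum>(y, z)\<leftarrow>cop H (u + v). F y z) = (\<Sum>(y, z)\<leftarrow>cop H u. F y z) + (\<Sum>(y, z)\<leftarrow>cop H v. F y z)"
    for u v using teq2_sum_list_eq[OF cop_add assms] by simp
  have "(\<Sum>(y, z)\<leftarrow>map (\<lambda>(y, z). (sm H c y, z)) ys. F y z) = s c (\<Sum>(y, z)\<leftarrow>ys. F y z)" for c ys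
    by (induction ys) (auto simp: linear_map_scale[OF assms(2)] W.scale_right_distrib)
  then show "(\<Sum>(y, z)\<leftarrow>cop H (sm H c u). F y z) = s c (\<Sum>(y, z)\<leftarrow>cop H u. F y z)" for c u
    using teq2_sum_list_eq[OF cop_scale assms] by simp
qed

lemma group_like_ant_mul:
  assumes "group_like H g"
  shows "mul H (ant H g) g = one H" and "mul H g (ant H g) = one H"
proof -
  have cop: "teq2 (sm H) (sm H) (cop H g) [(g, g)]" and "cou H g = 1"
    using assms by (auto simp: group_like_def)
  have ant_mul_left: "Vector_Spaces.linear (sm H) (sm H) (\<lambda>y. mul H (ant H y) z)" for z
    by (rule linear_map_compose[OF ant_linear mul_linear_left])
  have ant_mul_right: "Vector_Spaces.linear (sm H) (sm H) (\<lambda>z. mul H y (ant H z))" for y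
    by (rule linear_map_compose[OF ant_linear mul_linear_right])
  have "mul H (ant H g) g = (\<Sum>(y, z)\<leftarrow>cop H g. mul H (ant H y) z)"
    using teq2_sum_list_eq[OF cop vector_space_sm ant_mul_left mul_linear_right] by simp
  then show "mul H (ant H g) g = one H" using \<open>cou H g = 1\<close> by (simp add: ant_left)
  have "mul H g (ant H g) = (\<Sum>(y, z)\<leftarrow>cop H g. mul H y (ant H z))"
    using teq2_sum_list_eq[OF cop vector_space_sm mul_linear_left ant_mul_right] by simp
  then show "mul H g (ant H g) = one H" using \<open>cou H g = 1\<close> by (simp add: ant_right)
qed

lemma ant_eq_if_left_convolution_inverse:
  assumes T: "Vector_Spaces.linear (sm H) (sm H) T"
    and left_inv: "\<And>x. (\<Sum>(y, z)\<leftarrow>cop H x. mul H (T y) z) = sm H (cou H x) (one H)"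
  shows "T x = ant H x"
proof -
  define F where "F = (\<lambda>a b c. mul H (T a) (mul H b (ant H c)))"
  have F1: "Vector_Spaces.linear (sm H) (sm H) (\<lambda>a. F a b c)" for b c
    unfolding F_def by (rule linear_map_compose[OF T mul_linear_left])
  have F2: "Vector_Spaces.linear (sm H) (sm H) (\<lambda>b. F a b c)" for a c
    unfolding F_def by (rule linear_map_compose[OF mul_linear_left mul_linear_right])
  have F3: "Vector_Spaces.linear (sm H) (sm H) (F a b)" for a b
    unfolding F_def by (rule linear_map_compose[OF linear_map_compose[OF ant_linear mul_linear_right] mul_linear_right])
  have "(\<Sum>(a, b, c)\<leftarrow>cop2r H x. F a b c)
      = (\<Sum>(y, z)\<leftarrow>cop H x. mul H (T y) (\<Sum>(z1, z2)\<leftarrow>cop H z. mul H z1 (ant H z2)))"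
    by (simp add: F_def sum_list_cop2r linear_map_sum_list2[OF mul_linear_right])
  also have "\<dots> = T (\<Sum>(y, z)\<leftarrow>cop H x. sm H (cou H z) y)"
    by (simp add: ant_right linear_map_scale[OF mul_linear_right] linear_map_sum_list2[OF T] linear_map_scale[OF T])
  finally have right: "(\<Sum>(a, b, c)\<leftarrow>cop2r H x. F a b c) = T x"
    by (simp add: counit_right)
  have "(\<Sum>(a, b, c)\<leftarrow>cop2l H x. F a b c)
      = (\<Sum>(y, z)\<leftarrow>cop H x. mul H (\<Sum>(y1, y2)\<leftarrow>cop H y. mul H (T y1) y2) (ant H z))"
    by (simp add: F_def sum_list_cop2l mul_assoc linear_map_sum_list2[OF mul_linear_left])
  also have "\<dots> = ant H (\<Sum>(y, z)\<leftarrow>cop H x. sm H (cou H y) z)"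
    by (simp add: left_inv linear_map_scale[OF mul_linear_left] linear_map_sum_list2[OF ant_linear]
        linear_map_scale[OF ant_linear])
  finally have left: "(\<Sum>(a, b, c)\<leftarrow>cop2l H x. F a b c) = ant H x"
    by (simp add: counit_left)
  show ?thesis
    using teq3_sum_list_eq[OF coassoc vector_space_sm F1 F2 F3] left right by simp
qed


subsection \<open>The parity involution\<close>

lemma ev_od_decomp_unique:
  assumes "u \<in> ev H" "x - u \<in> od H" "u' \<in> ev H" "x - u' \<in> od H"
  shows "u = u'"
proof -
  have "u - u' \<in> ev H" using assms ev_diff by blast
  moreover have "u - u' = (x - u') - (x - u)" by simp
  then have "u - u' \<in> od H" using assms od_diff by metis
  ultimately show ?thesis using ev_od_eq_zero by fastforce
qed

lemma even_part: "even_part H x \<in> ev H \<and> x - even_part H x \<in> od H"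
proof -
  obtain u v where "u \<in> ev H" "v \<in> od H" "x = u + v" using ev_od_decomp by blast
  then have u: "u \<in> ev H \<and> x - u \<in> od H" by simp
  show ?thesis
    unfolding even_part_def by (rule theI[of "\<lambda>u. u \<in> ev H \<and> x - u \<in> od H", OF u]) (use u ev_od_decomp_unique in blast)
qed

lemma even_part_unique: "u \<in> ev H \<Longrightarrow> x - u \<in> od H \<Longrightarrow> even_part H x = u"
  using even_part ev_od_decomp_unique by blast

lemma parity_inv_ev: "x \<in> ev H \<Longrightarrow> parity_inv H x = x"
  using even_part_unique[of x x] by (simp add: parity_inv_def)

lemma parity_inv_od: "x \<in> od H \<Longrightarrow> parity_inv H x = - x"
  using even_part_unique[of 0 x] by (simp add: parity_inv_def)

lemma parity_inv_linear: "Vector_Spaces.linear (sm H) (sm H) (parity_inv H)"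
proof (rule linear_mapI[OF vector_space_sm vector_space_sm])
  fix x y c
  have "even_part H (x + y) = even_part H x + even_part H y"
  proof (rule even_part_unique)
    have "x + y - (even_part H x + even_part H y) = (x - even_part H x) + (y - even_part H y)" by simp
    then show "x + y - (even_part H x + even_part H y) \<in> od H" using even_part od_add by metis
  qed (use even_part ev_add in blast)
  then show "parity_inv H (x + y) = parity_inv H x + parity_inv H y"
    by (simp add: parity_inv_def algebra_simps)
  have "even_part H (sm H c x) = sm H c (even_part H x)"
  proof (rule even_part_unique)
    have "sm H c x - sm H c (even_part H x) = sm H c (x - even_part H x)"
      by (simp add: V.scale_right_diff_distrib)
    then show "sm H c x - sm H c (even_part H x) \<in> od H" using even_part od_scale by metis
  qed (use even_part ev_scale in blast)
  then show "parity_inv H (sm H c x) = sm H c (parity_inv H x)"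
    by (simp add: parity_inv_def V.scale_right_diff_distrib)
qed

lemma parity_inv_decomp:
  obtains u v where "u \<in> ev H" "v \<in> od H" "x = u + v" "parity_inv H x = u - v"
  using even_part[of x] by (intro that[of "even_part H x" "x - even_part H x"]) (auto simp: parity_inv_def)

lemma parity_inv_parity_inv [simp]: "parity_inv H (parity_inv H x) = x"
proof -
  obtain u v where "u \<in> ev H" "v \<in> od H" "x = u + v" "parity_inv H x = u - v"
    by (rule parity_inv_decomp)
  then show ?thesis by (simp add: linear_map_diff[OF parity_inv_linear] parity_inv_ev parity_inv_od)
qed

lemma scale_two: "sm H 2 x = x + x"
  using V.scale_left_distrib[of 1 1 x] by (simp add: one_add_one)

lemma ev_if_parity_inv_fixed:
  assumes "parity_inv H x = x" and "(2::'k) \<noteq> 0"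
  shows "x \<in> ev H"
proof -
  obtain u v where uv: "u \<in> ev H" "v \<in> od H" "x = u + v" "parity_inv H x = u - v"
    by (rule parity_inv_decomp)
  have "u - v = u + v" using assms(1) uv by simp
  have "v + v = (u + v) - (u - v)" by (simp add: algebra_simps)
  also have "\<dots> = 0" unfolding \<open>u - v = u + v\<close> by simp
  finally have "sm H 2 v = 0" by (simp add: scale_two)
  with assms(2) uv show ?thesis by simp
qed

lemma od_if_parity_inv_neg:
  assumes "parity_inv H x = - x" and "(2::'k) \<noteq> 0"
  shows "x \<in> od H"
proof -
  obtain u v where uv: "u \<in> ev H" "v \<in> od H" "x = u + v" "parity_inv H x = u - v"
    by (rule parity_inv_decomp)
  have "u - v = - (u + v)" using assms(1) uv by simp
  have "u + u = (u + v) + (u - v)" by (simp add: algebra_simps)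
  also have "\<dots> = 0" unfolding \<open>u - v = - (u + v)\<close> by simp
  finally have "sm H 2 u = 0" by (simp add: scale_two)
  with assms(2) uv show ?thesis by simp
qed

lemma parity_inv_mul_homp:
  assumes "homp H p x" "homp H q y"
  shows "parity_inv H (mul H x y) = mul H (parity_inv H x) (parity_inv H y)"
  using mul_homp[OF assms] assms
  by (cases p; cases q)
     (simp_all add: homp_def parity_inv_ev parity_inv_od linear_map_neg[OF mul_linear_left]
       linear_map_neg[OF mul_linear_right])

lemma parity_inv_mul: "parity_inv H (mul H x y) = mul H (parity_inv H x) (parity_inv H y)"
proof -
  obtain u v where x: "u \<in> ev H" "v \<in> od H" "x = u + v"
    using ev_od_decomp by blast
  obtain u' v' where y: "u' \<in> ev H" "v' \<in> od H" "y = u' + v'"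
    using ev_od_decomp by blast
  have hom: "homp H False u" "homp H True v" "homp H False u'" "homp H True v'"
    using x y by (simp_all add: homp_def)
  show ?thesis
    unfolding x(3) y(3)
    by (simp add: linear_map_add[OF mul_linear_left] linear_map_add[OF mul_linear_right]
        linear_map_add[OF parity_inv_linear] parity_inv_mul_homp[OF hom(1) hom(3)]
        parity_inv_mul_homp[OF hom(1) hom(4)] parity_inv_mul_homp[OF hom(2) hom(3)]
        parity_inv_mul_homp[OF hom(2) hom(4)] ac_simps)
qed

lemma cou_parity_inv: "cou H (parity_inv H x) = cou H x"
proof -
  obtain u v where "u \<in> ev H" "v \<in> od H" "x = u + v" "parity_inv H x = u - v"
    by (rule parity_inv_decomp)
  then show ?thesis by (simp add: linear_map_add[OF cou_linear] linear_map_diff[OF cou_linear] cou_od)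
qed

lemma cop_parity_inv:
  assumes "vector_space s"
    and F1: "\<And>z. Vector_Spaces.linear (sm H) s (\<lambda>y. F y z)"
    and F2: "\<And>y. Vector_Spaces.linear (sm H) s (F y)"
  shows "(\<Sum>(y, z)\<leftarrow>cop H x. F (parity_inv H y) (parity_inv H z)) = (\<Sum>(y, z)\<leftarrow>cop H (parity_inv H x). F y z)"
proof -
  have G: "Vector_Spaces.linear (sm H) s (\<lambda>x. \<Sum>(y, z)\<leftarrow>cop H x. F (parity_inv H y) (parity_inv H z))"
    by (rule linear_sum_list_cop[OF assms(1) linear_map_compose[OF parity_inv_linear F1]
          linear_map_compose[OF parity_inv_linear F2]])
  have Fs: "Vector_Spaces.linear (sm H) s (\<lambda>x. \<Sum>(y, z)\<leftarrow>cop H x. F y z)"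
    by (rule linear_sum_list_cop[OF assms])
  have homp_case: "(\<Sum>(y, z)\<leftarrow>cop H w. F (parity_inv H y) (parity_inv H z))
      = (\<Sum>(y, z)\<leftarrow>cop H (parity_inv H w). F y z)" if w: "homp H p w" for p w
  proof -
    have "(\<Sum>(y, z)\<leftarrow>cop H w. F (parity_inv H y) (parity_inv H z))
        = (\<Sum>(y, z)\<leftarrow>cop H w. if p then - F y z else F y z)"
    proof (rule sum_list_case_prod_cong)
      fix y z assume "(y, z) \<in> set (cop H w)"
      then obtain q r where "homp H q y" "homp H r z" "(q \<noteq> r) = p"
        using cop_homp[OF w] by blast
      then show "F (parity_inv H y) (parity_inv H z) = (if p then - F y z else F y z)"
        by (cases q; cases r)
           (auto simp: homp_def parity_inv_ev parity_inv_od linear_map_neg[OF F1] linear_map_neg[OF F2])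
    qed
    also have "\<dots> = (\<Sum>(y, z)\<leftarrow>cop H (parity_inv H w). F y z)"
      using w by (cases p)
        (simp_all add: homp_def parity_inv_ev parity_inv_od linear_map_neg[OF Fs] sum_list_case_prod_neg)
    finally show ?thesis .
  qed
  obtain u v where "u \<in> ev H" "v \<in> od H" "x = u + v"
    using ev_od_decomp by blast
  then show ?thesis
    using homp_case[of False u] homp_case[of True v]
    by (simp add: homp_def linear_map_add[OF G] linear_map_add[OF Fs] linear_map_add[OF parity_inv_linear])
qed

lemma ant_parity_inv: "ant H (parity_inv H x) = parity_inv H (ant H x)"
proof -
  define T where "T = (\<lambda>x. parity_inv H (ant H (parity_inv H x)))"
  have T: "Vector_Spaces.linear (sm H) (sm H) T"
    unfolding T_def
    by (rule linear_map_compose[OF linear_map_compose[OF parity_inv_linear ant_linear] parity_inv_linear])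
  have ant_mul_left: "Vector_Spaces.linear (sm H) (sm H) (\<lambda>y. mul H (ant H y) z)" for z
    by (rule linear_map_compose[OF ant_linear mul_linear_left])
  have "(\<Sum>(y, z)\<leftarrow>cop H x. mul H (T y) z) = sm H (cou H x) (one H)" for x
  proof -
    have "(\<Sum>(y, z)\<leftarrow>cop H x. mul H (T y) z)
        = parity_inv H (\<Sum>(y, z)\<leftarrow>cop H x. mul H (ant H (parity_inv H y)) (parity_inv H z))"
      by (simp add: T_def parity_inv_mul linear_map_sum_list2[OF parity_inv_linear])
    also have "\<dots> = parity_inv H (\<Sum>(y, z)\<leftarrow>cop H (parity_inv H x). mul H (ant H y) z)"
      by (simp add: cop_parity_inv[OF vector_space_sm ant_mul_left mul_linear_right])
    also have "\<dots> = sm H (cou H x) (one H)"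
      by (simp add: ant_left cou_parity_inv linear_map_scale[OF parity_inv_linear] parity_inv_ev[OF one_ev])
    finally show ?thesis .
  qed
  then have "T (parity_inv H x) = ant H (parity_inv H x)"
    by (rule ant_eq_if_left_convolution_inverse[OF T])
  then show ?thesis by (simp add: T_def)
qed

lemma ant_homp:
  assumes "(2::'k) \<noteq> 0" "homp H p x"
  shows "homp H p (ant H x)"
proof (cases p)
  case True
  with assms(2) have "parity_inv H (ant H x) = - ant H x"
    by (simp add: homp_def parity_inv_od linear_map_neg[OF ant_linear] flip: ant_parity_inv)
  with True show ?thesis by (simp add: homp_def od_if_parity_inv_neg[OF _ assms(1)])
next
  case False
  with assms(2) have "parity_inv H (ant H x) = ant H x"
    by (simp add: homp_def parity_inv_ev flip: ant_parity_inv)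
  with False show ?thesis by (simp add: homp_def ev_if_parity_inv_fixed[OF _ assms(1)])
qed

lemma parity_twist_linear: "Vector_Spaces.linear (sm H) (sm H) (parity_twist H p)"
  by (rule linear_mapI[OF vector_space_sm vector_space_sm])
     (simp_all add: parity_twist_def linear_map_add[OF parity_inv_linear] linear_map_scale[OF parity_inv_linear])

lemma parity_twist_twist [simp]: "parity_twist H p (parity_twist H p x) = x"
  by (simp add: parity_twist_def)

lemma parity_twist_ev: "x \<in> ev H \<Longrightarrow> parity_twist H p x = x"
  by (simp add: parity_twist_def parity_inv_ev)

lemma parity_twist_homp: "homp H q x \<Longrightarrow> parity_twist H p x = sm H (ksgn p q) x"
  by (cases p; cases q) (simp_all add: parity_twist_def homp_def ksgn_def parity_inv_ev parity_inv_od)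

end

section \<open>Integral, coaction and distinguished group-like element\<close>

locale quotient_integral_setting =
  A: comm_hopf_superalgebra A + B: comm_hopf_superalgebra B
  for A :: "('k::field, 'a::ab_group_add) hsalg" and B :: "('k, 'b::ab_group_add) hsalg" +
  fixes \<pi> :: "'a \<Rightarrow> 'b" and \<phi> :: "'b \<Rightarrow> 'k" and \<chi> :: 'a and a :: 'b
  assumes two: "(2::'k) \<noteq> 0"
    and hom: "hopf_superalg_hom A B \<pi>" and surj: "surj \<pi>"
    and left_int: "left_integral B \<phi>" and phi_nonzero: "\<phi> \<noteq> (\<lambda>_. 0)"
    and phi_homog: "homog_functional B \<phi>"
    and coacts: "coacts_by A \<pi> B \<phi> \<chi>" and dist: "distinguished_gl B \<phi> a"
begin

lemma pi_linear: "Vector_Spaces.linear (sm A) (sm B) \<pi>"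
  using hom by (simp add: hopf_superalg_hom_def)

lemma pi_homp: "homp A p x \<Longrightarrow> homp B p (\<pi> x)"
  using hom by (simp add: hopf_superalg_hom_def)

lemma pi_mul: "\<pi> (mul A x y) = mul B (\<pi> x) (\<pi> y)"
  using hom by (simp add: hopf_superalg_hom_def)

lemma pi_cop: "teq2 (sm B) (sm B) (cop B (\<pi> x)) (map (\<lambda>(y, z). (\<pi> y, \<pi> z)) (cop A x))"
  using hom by (simp add: hopf_superalg_hom_def)

lemma pi_ant: "\<pi> (ant A x) = ant B (\<pi> x)"
  using hom by (simp add: hopf_superalg_hom_def)

lemma pi_parity_twist: "\<pi> (parity_twist A p x) = parity_twist B p (\<pi> x)"
proof -
  obtain u v where "u \<in> ev A" "v \<in> od A" "x = u + v"
    using A.ev_od_decomp by blast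
  moreover have "\<pi> u \<in> ev B" "\<pi> v \<in> od B"
    using pi_homp[of False u] pi_homp[of True v] calculation by (simp_all add: homp_def)
  ultimately show ?thesis
    by (simp add: parity_twist_def linear_map_add[OF pi_linear] linear_map_add[OF A.parity_inv_linear]
        linear_map_add[OF B.parity_inv_linear] linear_map_diff[OF pi_linear]
        A.parity_inv_ev A.parity_inv_od B.parity_inv_ev B.parity_inv_od)
qed

lemma cop2r_pi_sum_list:
  assumes F1: "\<And>v w. Vector_Spaces.linear (sm B) (sm B) (\<lambda>u. F u v w)"
    and F2: "\<And>u w. Vector_Spaces.linear (sm B) (sm B) (\<lambda>v. F u v w)"
    and F3: "\<And>u v. Vector_Spaces.linear (sm B) (sm B) (F u v)"
  shows "(\<Sum>(x1, x2, x3)\<leftarrow>cop2r A x. F (\<pi> x1) (\<pi> x2) (\<pi> x3)) = (\<Sum>(u, v, w)\<leftarrow>cop2r B (\<pi> x). F u v w)"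
proof -
  define G where "G = (\<lambda>u v. \<Sum>(v1, v2)\<leftarrow>cop B v. F u v1 v2)"
  have G1: "Vector_Spaces.linear (sm B) (sm B) (\<lambda>u. G u v)" for v
    unfolding G_def by (rule linear_sum_list_case_prod[OF B.vector_space_sm B.vector_space_sm F1])
  have G2: "Vector_Spaces.linear (sm B) (sm B) (G u)" for u
    unfolding G_def by (rule B.linear_sum_list_cop[OF B.vector_space_sm F2 F3])
  have inner: "(\<Sum>(w1, w2)\<leftarrow>cop A w. F u (\<pi> w1) (\<pi> w2)) = G u (\<pi> w)" for u w
    using teq2_sum_list_eq[OF pi_cop[of w] B.vector_space_sm F2[of u] F3[of u]]
    by (simp only: G_def sum_list_map_pair)
  have "(\<Sum>(x1, x2, x3)\<leftarrow>cop2r A x. F (\<pi> x1) (\<pi> x2) (\<pi> x3)) = (\<Sum>(u, w)\<leftarrow>cop A x. G (\<pi> u) (\<pi> w))"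
    by (simp add: A.sum_list_cop2r inner)
  also have "\<dots> = (\<Sum>(u, v)\<leftarrow>cop B (\<pi> x). G u v)"
    using teq2_sum_list_eq[OF pi_cop[of x] B.vector_space_sm G1 G2] by (simp only: sum_list_map_pair)
  also have "\<dots> = (\<Sum>(u, v, w)\<leftarrow>cop2r B (\<pi> x). F u v w)"
    unfolding G_def by (rule B.sum_list_cop2r[symmetric])
  finally show ?thesis .
qed

lemma phi_linear: "Vector_Spaces.linear (sm B) (*) \<phi>"
  using left_int by (simp add: left_integral_def dual_space_def)

definition phi_odd :: bool where
  "phi_odd \<longleftrightarrow> (\<exists>x\<in>od B. \<phi> x \<noteq> 0)"

text \<open>Twisting by the parity of \<open>\<phi>\<close> absorbs the Koszul signs of the Sweedler sums below:
  only terms whose \<open>\<phi>\<close>-argument has the parity of \<open>\<phi>\<close> survive.\<close>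

abbreviation QA :: "'a \<Rightarrow> 'a" where
  "QA \<equiv> parity_twist A phi_odd"

abbreviation QB :: "'b \<Rightarrow> 'b" where
  "QB \<equiv> parity_twist B phi_odd"

lemma homp_if_phi_nonzero: "homp B q y \<Longrightarrow> \<phi> y \<noteq> 0 \<Longrightarrow> q = phi_odd"
  using phi_homog by (cases q) (auto simp: homp_def phi_odd_def homog_functional_def)

lemma phi_nonzero_homp: "\<exists>y. \<phi> y \<noteq> 0 \<and> homp B phi_odd y"
proof -
  obtain z where "\<phi> z \<noteq> 0" using phi_nonzero by auto
  moreover obtain u v where "u \<in> ev B" "v \<in> od B" "z = u + v"
    using B.ev_od_decomp by blast
  ultimately have "\<phi> u \<noteq> 0 \<or> \<phi> v \<noteq> 0" "homp B False u" "homp B True v"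
    by (auto simp: homp_def linear_map_add[OF phi_linear])
  then show ?thesis using homp_if_phi_nonzero by metis
qed

lemma ksgn_phi_right:
  assumes h: "Vector_Spaces.linear (sm B) (*) h" and "homog B y1" "homog B y2"
  shows "ksgn (par B y1) (par B y2) * h y1 * \<phi> y2 = h (QB y1) * \<phi> y2"
proof (cases "\<phi> y2 = 0")
  case False
  have "par B y2 = phi_odd"
    using homp_if_phi_nonzero[OF B.homp_par[OF assms(3)] False] .
  moreover have "QB y1 = sm B (ksgn phi_odd (par B y1)) y1"
    by (rule B.parity_twist_homp[OF B.homp_par[OF assms(2)]])
  ultimately show ?thesis by (simp add: linear_map_scale[OF h] ksgn_def)
qed simp

lemma ksgn_phi_left:
  assumes h: "Vector_Spaces.linear (sm B) (*) h" and "homog B y1" "homog B y2"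
  shows "ksgn (par B y1) (par B y2) * \<phi> y1 * h y2 = \<phi> y1 * h (QB y2)"
  using ksgn_phi_right[OF h assms(3,2)] by (simp add: ksgn_def conj_commute mult_ac)

lemma left_integral_sweedler: "(\<Sum>(u1, u2)\<leftarrow>cop B u. sm B (\<phi> u2) (QB u1)) = sm B (\<phi> u) (one B)"
proof (rule eq_by_linear_functionals[OF B.vector_space_sm])
  fix h :: "'b \<Rightarrow> 'k" assume h: "Vector_Spaces.linear (sm B) (*) h"
  have "h (\<Sum>(u1, u2)\<leftarrow>cop B u. sm B (\<phi> u2) (QB u1))
      = (\<Sum>(u1, u2)\<leftarrow>cop B u. ksgn (par B u1) (par B u2) * h u1 * \<phi> u2)"
    unfolding linear_map_sum_list2[OF h]
  proof (rule sum_list_case_prod_cong)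
    fix u1 u2 assume "(u1, u2) \<in> set (cop B u)"
    then have "homog B u1" "homog B u2" using B.cop_homog by auto
    have "h (sm B (\<phi> u2) (QB u1)) = h (QB u1) * \<phi> u2"
      by (simp add: linear_map_scale[OF h] mult.commute)
    also have "\<dots> = ksgn (par B u1) (par B u2) * h u1 * \<phi> u2"
      by (rule ksgn_phi_right[OF h \<open>homog B u1\<close> \<open>homog B u2\<close>, symmetric])
    finally show "h (sm B (\<phi> u2) (QB u1)) = ksgn (par B u1) (par B u2) * h u1 * \<phi> u2" .
  qed
  also have "\<dots> = conv B h \<phi> u" by (simp add: conv_def)
  also have "\<dots> = h (sm B (\<phi> u) (one B))"
    using left_int h by (simp add: left_integral_def dual_space_def linear_map_scale[OF h])
  finally show "h (\<Sum>(u1, u2)\<leftarrow>cop B u. sm B (\<phi> u2) (QB u1)) = h (sm B (\<phi> u) (one B))" .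
qed

lemma distinguished_gl_sweedler: "(\<Sum>(u1, u2)\<leftarrow>cop B u. sm B (\<phi> u1) u2) = sm B (\<phi> u) (QB a)"
proof (rule eq_by_linear_functionals[OF B.vector_space_sm])
  fix h :: "'b \<Rightarrow> 'k" assume h: "Vector_Spaces.linear (sm B) (*) h"
  define g where "g = (\<lambda>x. h (QB x))"
  have g: "Vector_Spaces.linear (sm B) (*) g"
    unfolding g_def by (rule linear_map_compose[OF B.parity_twist_linear h])
  have "h (\<Sum>(u1, u2)\<leftarrow>cop B u. sm B (\<phi> u1) u2)
      = (\<Sum>(u1, u2)\<leftarrow>cop B u. ksgn (par B u1) (par B u2) * \<phi> u1 * g u2)"
    unfolding linear_map_sum_list2[OF h]
  proof (rule sum_list_case_prod_cong)
    fix u1 u2 assume "(u1, u2) \<in> set (cop B u)"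
    then have "homog B u1" "homog B u2" using B.cop_homog by auto
    have "h (sm B (\<phi> u1) u2) = \<phi> u1 * g (QB u2)"
      by (simp add: linear_map_scale[OF h] g_def)
    also have "\<dots> = ksgn (par B u1) (par B u2) * \<phi> u1 * g u2"
      by (rule ksgn_phi_left[OF g \<open>homog B u1\<close> \<open>homog B u2\<close>, symmetric])
    finally show "h (sm B (\<phi> u1) u2) = ksgn (par B u1) (par B u2) * \<phi> u1 * g u2" .
  qed
  also have "\<dots> = conv B \<phi> g u" by (simp add: conv_def)
  also have "\<dots> = h (sm B (\<phi> u) (QB a))"
    using dist g by (simp add: distinguished_gl_def dual_space_def linear_map_scale[OF h] g_def)
  finally show "h (\<Sum>(u1, u2)\<leftarrow>cop B u. sm B (\<phi> u1) u2) = h (sm B (\<phi> u) (QB a))" .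
qed


lemma coaction_term:
  assumes "homog A x1" "homog A x2" "homog A x3"
  defines "C \<equiv> sm A (ksgn (par A x2) (par A x3)) (mul A x1 (ant A x3))"
  shows "sm A (ksgn (par A C) (par B (\<pi> x2)) * \<phi> (\<pi> x2)) C = sm A (\<phi> (\<pi> x2)) (mul A (QA x1) (ant A x3))"
proof (cases "\<phi> (\<pi> x2) = 0")
  case False
  define m where "m = mul A x1 (ant A x3)"
  define q1 q3 where "q1 = par A x1" and "q3 = par A x3"
  have x1: "homp A q1 x1" and x2: "homp A (par A x2) x2" and x3: "homp A q3 x3"
    using assms(1-3) by (simp_all add: q1_def q3_def A.homp_par)
  have x2_parity: "par A x2 = phi_odd"
    using homp_if_phi_nonzero[OF pi_homp[OF x2] False] .
  have "\<pi> x2 \<noteq> 0" using False linear_map_zero[OF phi_linear] by auto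
  then have pi_x2_parity: "par B (\<pi> x2) = phi_odd"
    using B.par_eq_if_homp[OF pi_homp[OF x2]] x2_parity by simp
  have C: "C = sm A (ksgn phi_odd q3) m"
    by (simp add: C_def m_def q3_def x2_parity)
  have m: "homp A (q1 \<noteq> q3) m"
    unfolding m_def by (rule A.mul_homp[OF x1 A.ant_homp[OF two x3]])
  have Q: "mul A (QA x1) (ant A x3) = sm A (ksgn phi_odd q1) m"
    by (simp add: A.parity_twist_homp[OF x1] linear_map_scale[OF A.mul_linear_left] m_def)
  show ?thesis
  proof (cases "m = 0")
    case False
    then have "par A (sm A (ksgn phi_odd q3) m) = (q1 \<noteq> q3)"
      by (intro A.par_eq_if_homp[OF A.homp_scale[OF m]]) (simp add: ksgn_def)
    then show ?thesis
      unfolding C Q pi_x2_parity by (cases phi_odd; cases q1; cases q3) (simp_all add: ksgn_def)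
  qed (simp add: C Q)
qed simp

lemma coaction_sweedler:
  "(\<Sum>(x1, x2, x3)\<leftarrow>cop2r A (SOME x. \<pi> x = y). sm A (\<phi> (\<pi> x2)) (mul A (QA x1) (ant A x3)))
    = sm A (\<phi> y) \<chi>"
proof -
  let ?C = "\<lambda>x1 x2 x3. sm A (ksgn (par A x2) (par A x3)) (mul A x1 (ant A x3))"
  have "(\<Sum>(c, b)\<leftarrow>coactB A \<pi> y. sm A (ksgn (par A c) (par B b) * \<phi> b) c) = sm A (\<phi> y) \<chi>"
    using coacts unfolding coacts_by_def by blast
  then have "(\<Sum>(x1, x2, x3)\<leftarrow>cop2r A (SOME x. \<pi> x = y).
      sm A (ksgn (par A (?C x1 x2 x3)) (par B (\<pi> x2)) * \<phi> (\<pi> x2)) (?C x1 x2 x3)) = sm A (\<phi> y) \<chi>"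
    by (simp only: coactB_def adj_expr_def sum_list_map_triple)
  moreover have "(\<Sum>(x1, x2, x3)\<leftarrow>cop2r A (SOME x. \<pi> x = y).
      sm A (ksgn (par A (?C x1 x2 x3)) (par B (\<pi> x2)) * \<phi> (\<pi> x2)) (?C x1 x2 x3))
    = (\<Sum>(x1, x2, x3)\<leftarrow>cop2r A (SOME x. \<pi> x = y). sm A (\<phi> (\<pi> x2)) (mul A (QA x1) (ant A x3)))"
    by (rule sum_list_case_prod3_cong, rule coaction_term) (auto dest: A.cop2r_homog)
  ultimately show ?thesis by simp
qed

lemma phi_scale_pi_chi: "sm B (\<phi> y) (\<pi> \<chi>) = sm B (\<phi> y) (ant B (QB a))"
proof -
  define x where "x = (SOME x. \<pi> x = y)"
  have "\<exists>x. \<pi> x = y" using surj by (metis surjD)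
  then have x: "\<pi> x = y" unfolding x_def by (rule someI_ex)
  define F where "F = (\<lambda>u v w. sm B (\<phi> v) (mul B (QB u) (ant B w)))"
  have F1: "Vector_Spaces.linear (sm B) (sm B) (\<lambda>u. F u v w)" for v w
    unfolding F_def
    by (rule linear_map_compose[OF linear_map_compose[OF B.parity_twist_linear B.mul_linear_left]
          B.V.linear_scale_self])
  have F2: "Vector_Spaces.linear (sm B) (sm B) (\<lambda>v. F u v w)" for u w
    unfolding F_def by (rule linear_map_compose[OF phi_linear B.V.linear_scale_left])
  have F3: "Vector_Spaces.linear (sm B) (sm B) (F u v)" for u v
    unfolding F_def
    by (rule linear_map_compose[OF linear_map_compose[OF B.ant_linear B.mul_linear_right] B.V.linear_scale_self])
  have "sm B (\<phi> y) (\<pi> \<chi>) = \<pi> (\<Sum>(x1, x2, x3)\<leftarrow>cop2r A x. sm A (\<phi> (\<pi> x2)) (mul A (QA x1) (ant A x3)))"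
    using coaction_sweedler[of y, folded x_def] by (simp add: linear_map_scale[OF pi_linear])
  also have "\<dots> = (\<Sum>(x1, x2, x3)\<leftarrow>cop2r A x. F (\<pi> x1) (\<pi> x2) (\<pi> x3))"
    by (simp add: F_def linear_map_sum_list3[OF pi_linear] linear_map_scale[OF pi_linear] pi_mul
        pi_parity_twist pi_ant)
  also have "\<dots> = (\<Sum>(u, v, w)\<leftarrow>cop2l B y. F u v w)"
    using cop2r_pi_sum_list[OF F1 F2 F3, of x] teq3_sum_list_eq[OF B.coassoc B.vector_space_sm F1 F2 F3]
    by (simp add: x)
  also have "\<dots> = (\<Sum>(u, w)\<leftarrow>cop B y. mul B (\<Sum>(u1, u2)\<leftarrow>cop B u. sm B (\<phi> u2) (QB u1)) (ant B w))"
    by (simp add: B.sum_list_cop2l F_def linear_map_sum_list2[OF B.mul_linear_left]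
        linear_map_scale[OF B.mul_linear_left])
  also have "\<dots> = ant B (\<Sum>(u, w)\<leftarrow>cop B y. sm B (\<phi> u) w)"
    by (simp add: left_integral_sweedler linear_map_scale[OF B.mul_linear_left]
        linear_map_sum_list2[OF B.ant_linear] linear_map_scale[OF B.ant_linear])
  also have "\<dots> = sm B (\<phi> y) (ant B (QB a))"
    by (simp add: distinguished_gl_sweedler linear_map_scale[OF B.ant_linear])
  finally show ?thesis .
qed

lemma distinguished_gl_even: "a \<in> ev B"
proof -
  obtain y where y: "\<phi> y \<noteq> 0" "homp B phi_odd y"
    using phi_nonzero_homp by blast
  have "(\<Sum>(u1, u2)\<leftarrow>cop B y. sm B (\<phi> u1) u2) \<in> ev B"
  proof (rule B.ev_sum_list2)
    fix u1 u2 assume "(u1, u2) \<in> set (cop B y)"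
    then obtain q r where "homp B q u1" "homp B r u2" "(q \<noteq> r) = phi_odd"
      using B.cop_homp[OF y(2)] by blast
    then show "sm B (\<phi> u1) u2 \<in> ev B"
      using homp_if_phi_nonzero[of q u1] by (cases "\<phi> u1 = 0") (auto simp: homp_def B.ev_scale)
  qed
  then have "sm B (\<phi> y) (QB a) \<in> ev B" by (simp add: distinguished_gl_sweedler)
  then have "sm B (inverse (\<phi> y)) (sm B (\<phi> y) (QB a)) \<in> ev B" by (rule B.ev_scale)
  then have "QB a \<in> ev B" using y(1) by simp
  moreover from this have "QB (QB a) = QB a" by (rule B.parity_twist_ev)
  ultimately show ?thesis by simp
qed

lemma pi_chi_mul_a: "mul B (\<pi> \<chi>) a = one B \<and> mul B a (\<pi> \<chi>) = one B"
proof -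
  obtain y where "\<phi> y \<noteq> 0" using phi_nonzero by auto
  moreover have "QB a = a" using distinguished_gl_even by (rule B.parity_twist_ev)
  ultimately have "\<pi> \<chi> = ant B a" using phi_scale_pi_chi[of y] by simp
  moreover have "group_like B a" using dist by (simp add: distinguished_gl_def)
  ultimately show ?thesis using B.group_like_ant_mul by simp
qed

end

theorem mainTheorem16:
  fixes A :: "('k::field, 'a::ab_group_add) hsalg"
    and B :: "('k, 'b::ab_group_add) hsalg"
    and \<pi> :: "'a \<Rightarrow> 'b"
    and \<phi> :: "'b \<Rightarrow> 'k" and \<chi> :: 'a and a :: 'b
  assumes "(2::'k) \<noteq> 0"
    and "algebraic_supergroup_alg A"
    and "comm_hopf_superalg B" and "fin_dim B"
    and "hopf_superalg_hom A B \<pi>" and "surj \<pi>"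
    and "normal_quotient A B \<pi>"
    and "left_integral B \<phi>" and "\<phi> \<noteq> (\<lambda>_. 0)" and "homog_functional B \<phi>"
    and "group_like A \<chi>" and "coacts_by A \<pi> B \<phi> \<chi>"
    and "distinguished_gl B \<phi> a"
  shows "mul B (\<pi> \<chi>) a = one B \<and> mul B a (\<pi> \<chi>) = one B"
proof -
  have "quotient_integral_setting A B \<pi> \<phi> \<chi> a"
    using assms
    by (simp add: quotient_integral_setting_def quotient_integral_setting_axioms_def
        comm_hopf_superalgebra_def algebraic_supergroup_alg_def)
  then show ?thesis by (rule quotient_integral_setting.pi_chi_mul_a)
qed

end
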